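(* Let $\hat{\mathsf A}$ be a $\chi\times\chi$ matrix with entries in $\mathcal A$, and let $A_0=\langle\hat 1,\hat{\mathsf A}\rangle$ be the complex matrix of its identity components. If every eigenvalue of the transfer matrix $T_A$ lies strictly inside the unit disk, then every eigenvalue of $A_0$ lies strictly inside the unit disk.
   Context: $\mathcal A$ is the algebra of operators on $\mathbb C^q$ with inner product $\langle\hat A,\hat B\rangle=\mathrm{Tr}[\hat A^\dagger\hat B]/\mathrm{Tr}[\hat 1]$ and an orthonormal basis $\{\hat O_\alpha\}$ with $\hat O_0=\hat 1$. Writing $\hat{\mathsf A}=\sum_\alpha\hat O_\alpha A_\alpha$ with $(A_\alpha)_{ab}=\langle\hat O_\alpha,\hat{\mathsf A}_{ab}\rangle$ (so $A_0=\langle\hat 1,\hat{\mathsf A}\rangle$ entrywise), the transfer matrix is $T_A=\sum_\alpha\overline{A_\alpha}\otimes A_\alpha$. *)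

theory Defs
  imports Complex_Main "Jordan_Normal_Form.Matrix" "Jordan_Normal_Form.Char_Poly"
begin

(* Operators on C^q are represented as q x q complex matrices (complex mat in carrier_mat q q). *)

(* Normalized Hilbert-Schmidt inner product <A,B> = Tr[A^dagger B] / Tr[1] on q x q matrices *)
definition hs_inner :: "nat \<Rightarrow> complex mat \<Rightarrow> complex mat \<Rightarrow> complex" where
  "hs_inner q A B = (\<Sum>i<q. \<Sum>j<q. cnj (A $$ (i, j)) * B $$ (i, j)) / of_nat q"

definition orthonormal_operator_basis :: "nat \<Rightarrow> (nat \<Rightarrow> complex mat) \<Rightarrow> bool" where
  "orthonormal_operator_basis q Ob \<longleftrightarrow>
     (\<forall>\<alpha><q^2. Ob \<alpha> \<in> carrier_mat q q) \<and>
     (\<forall>\<alpha><q^2. \<forall>\<beta><q^2. hs_inner q (Ob \<alpha>) (Ob \<beta>) = (if \<alpha> = \<beta> then 1 else 0)) \<and>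
     Ob 0 = 1\<^sub>m q"

definition component_mat :: "nat \<Rightarrow> nat \<Rightarrow> (nat \<Rightarrow> complex mat) \<Rightarrow> (nat \<Rightarrow> nat \<Rightarrow> complex mat) \<Rightarrow> nat \<Rightarrow> complex mat" where
  "component_mat q \<chi> Ob AA \<alpha> = mat \<chi> \<chi> (\<lambda>(a, b). hs_inner q (Ob \<alpha>) (AA a b))"

definition conj_mat :: "complex mat \<Rightarrow> complex mat" where
  "conj_mat A = map_mat cnj A"

definition kron :: "'a :: times mat \<Rightarrow> 'a mat \<Rightarrow> 'a mat" where
  "kron A B = mat (dim_row A * dim_row B) (dim_col A * dim_col B)
     (\<lambda>(i, j). A $$ (i div dim_row B, j div dim_col B) * B $$ (i mod dim_row B, j mod dim_col B))"

(* transfer matrix T_A = sum_alpha conj(A_alpha) (x) A_alpha, a chi^2 x chi^2 matrix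
   (the matrix sum is written entrywise) *)
definition transfer_mat :: "nat \<Rightarrow> nat \<Rightarrow> (nat \<Rightarrow> complex mat) \<Rightarrow> (nat \<Rightarrow> nat \<Rightarrow> complex mat) \<Rightarrow> complex mat" where
  "transfer_mat q \<chi> Ob AA = mat (\<chi> * \<chi>) (\<chi> * \<chi>)
     (\<lambda>ij. \<Sum>\<alpha><q^2. kron (conj_mat (component_mat q \<chi> Ob AA \<alpha>)) (component_mat q \<chi> Ob AA \<alpha>) $$ ij)"

end

theory Submission
  imports Defs "Jordan_Normal_Form.Spectral_Radius"
begin

text \<open>Let \<open>A\<^sub>0 w = z w\<close> with \<open>w \<noteq> 0\<close> and put \<open>x = conj w \<otimes> w\<close>. Every summand
  \<open>conj A\<^sub>\<alpha> \<otimes> A\<^sub>\<alpha>\<close> of \<open>T\<close> maps the cone of (vectorised) positive semidefinite matrices into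
  itself, and the summand \<open>\<alpha> = 0\<close> maps \<open>x\<close> to \<open>\<bar>z\<bar>\<^sup>2 x\<close>; hence \<open>T\<^sup>k x - \<bar>z\<bar>\<^bsup>2k\<^esup> x\<close>
  stays in the cone. Pairing with \<open>w \<otimes> conj w\<close>, which is nonnegative on the cone, gives
  \<open>\<langle>w \<otimes> conj w, T\<^sup>k x\<rangle> \<ge> \<bar>z\<bar>\<^bsup>2k\<^esup> \<parallel>w\<parallel>\<^sup>4\<close>, while the entries of \<open>T\<^sup>k\<close> are \<open>O(s\<^sup>k)\<close> for
  every \<open>s\<close> above the spectral radius of \<open>T\<close>. So \<open>\<bar>z\<bar>\<^sup>2 \<le> \<rho>(T) < 1\<close>.\<close>

lemma sum_lessThan_mult_split:
  fixes m n :: nat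
  shows "(\<Sum>i<m * n. f i) = (\<Sum>a<m. \<Sum>b<n. f (a * n + b))"
proof -
  have "(\<Sum>i<m * n. f i) = (\<Sum>a<m. \<Sum>i\<in>{a * n..<a * n + n}. f i)"
    using sum.nat_group[of f n m] by simp
  also have "\<dots> = (\<Sum>a<m. \<Sum>b<n. f (a * n + b))"
    by (subst sum.atLeastLessThan_shift_0) (simp add: atLeast0LessThan)
  finally show ?thesis .
qed

lemma pair_index_less:
  fixes a b m n :: nat
  assumes "a < m" "b < n"
  shows "a * n + b < m * n"
proof -
  have "a * n + b < Suc a * n" using assms(2) by simp
  also have "\<dots> \<le> m * n" using assms(1) by (intro mult_right_mono) auto
  finally show ?thesis .
qed

definition kron_vec :: "'a :: times vec \<Rightarrow> 'a vec \<Rightarrow> 'a vec" where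
  "kron_vec v w = vec (dim_vec v * dim_vec w) (\<lambda>i. v $ (i div dim_vec w) * w $ (i mod dim_vec w))"

lemma dim_kron_vec [simp]: "dim_vec (kron_vec v w) = dim_vec v * dim_vec w"
  by (simp add: kron_vec_def)

lemma kron_vec_carrier [simp]:
  "v \<in> carrier_vec m \<Longrightarrow> w \<in> carrier_vec n \<Longrightarrow> kron_vec v w \<in> carrier_vec (m * n)"
  by (intro carrier_vecI) (simp add: carrier_vecD)

lemma index_kron_vec:
  assumes "v \<in> carrier_vec m" "w \<in> carrier_vec n" "a < m" "b < n"
  shows "kron_vec v w $ (a * n + b) = v $ a * w $ b"
proof -
  have "(a * n + b) div n = a" "(a * n + b) mod n = b" using assms(4) by auto
  with assms pair_index_less[OF assms(3,4)] show ?thesis by (simp add: kron_vec_def)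
qed

lemma kron_vec_smult:
  fixes v w :: "'a :: comm_semiring_0 vec"
  shows "kron_vec (a \<cdot>\<^sub>v v) (b \<cdot>\<^sub>v w) = (a * b) \<cdot>\<^sub>v kron_vec v w"
proof (rule eq_vecI)
  fix i assume "i < dim_vec ((a * b) \<cdot>\<^sub>v kron_vec v w)"
  then have i: "i < dim_vec v * dim_vec w" by simp
  then have "dim_vec w > 0" by (cases "dim_vec w") auto
  with i have "i div dim_vec w < dim_vec v" "i mod dim_vec w < dim_vec w"
    by (auto simp: less_mult_imp_div_less)
  with i show "kron_vec (a \<cdot>\<^sub>v v) (b \<cdot>\<^sub>v w) $ i = ((a * b) \<cdot>\<^sub>v kron_vec v w) $ i"
    by (simp add: kron_vec_def mult_ac)
qed simp

lemma scalar_prod_kron_vec: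
  fixes a c :: "'a :: comm_semiring_0 vec"
  assumes "a \<in> carrier_vec m" "c \<in> carrier_vec m" "b \<in> carrier_vec n" "d \<in> carrier_vec n"
  shows "kron_vec a b \<bullet> kron_vec c d = (a \<bullet> c) * (b \<bullet> d)"
proof -
  have "kron_vec a b \<bullet> kron_vec c d = (\<Sum>i<m * n. kron_vec a b $ i * kron_vec c d $ i)"
    using assms by (simp add: scalar_prod_def lessThan_atLeast0)
  also have "\<dots> = (\<Sum>x<m. \<Sum>y<n. (a $ x * c $ x) * (b $ y * d $ y))"
    using assms by (simp add: sum_lessThan_mult_split index_kron_vec mult_ac)
  also have "\<dots> = (a \<bullet> c) * (b \<bullet> d)"
    using assms by (simp add: scalar_prod_def lessThan_atLeast0 sum_product)
  finally show ?thesis .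
qed

lemma dim_row_kron [simp]: "dim_row (kron A B) = dim_row A * dim_row B"
  by (simp add: kron_def)

lemma dim_col_kron [simp]: "dim_col (kron A B) = dim_col A * dim_col B"
  by (simp add: kron_def)

lemma index_kron:
  "i < dim_row A * dim_row B \<Longrightarrow> j < dim_col A * dim_col B \<Longrightarrow>
    kron A B $$ (i, j) = A $$ (i div dim_row B, j div dim_col B) * B $$ (i mod dim_row B, j mod dim_col B)"
  by (simp add: kron_def)

lemma kron_carrier_mat:
  "A \<in> carrier_mat m n \<Longrightarrow> B \<in> carrier_mat p r \<Longrightarrow> kron A B \<in> carrier_mat (m * p) (n * r)"
  by (intro carrier_matI) auto

lemma mult_kron_mat_vec:
  fixes A B :: "'a :: comm_semiring_0 mat"
  assumes A: "A \<in> carrier_mat m n" and B: "B \<in> carrier_mat p r"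
    and v: "v \<in> carrier_vec n" and w: "w \<in> carrier_vec r"
  shows "kron A B *\<^sub>v kron_vec v w = kron_vec (A *\<^sub>v v) (B *\<^sub>v w)"
proof (rule eq_vecI)
  fix i assume "i < dim_vec (kron_vec (A *\<^sub>v v) (B *\<^sub>v w))"
  then have i: "i < m * p" using A B by simp
  then have "p > 0" by (cases p) auto
  with i have div_mod: "i div p < m" "i mod p < p"
    by (auto simp: less_mult_imp_div_less)
  have "(kron A B *\<^sub>v kron_vec v w) $ i
      = (\<Sum>j<n * r. A $$ (i div p, j div r) * B $$ (i mod p, j mod r) * kron_vec v w $ j)"
    using A B v w i by (simp add: index_kron scalar_prod_def lessThan_atLeast0)
  also have "\<dots> = (\<Sum>a<n. \<Sum>b<r. (A $$ (i div p, a) * v $ a) * (B $$ (i mod p, b) * w $ b))"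
    using v w by (simp add: sum_lessThan_mult_split index_kron_vec mult_ac)
  also have "\<dots> = kron_vec (A *\<^sub>v v) (B *\<^sub>v w) $ i"
    using A B v w i div_mod by (simp add: kron_vec_def scalar_prod_def lessThan_atLeast0 sum_product)
  finally show "(kron A B *\<^sub>v kron_vec v w) $ i = kron_vec (A *\<^sub>v v) (B *\<^sub>v w) $ i" .
next
  show "dim_vec (kron A B *\<^sub>v kron_vec v w) = dim_vec (kron_vec (A *\<^sub>v v) (B *\<^sub>v w))"
    using A B by simp
qed

lemma conj_mat_carrier [simp]: "A \<in> carrier_mat m n \<Longrightarrow> conj_mat A \<in> carrier_mat m n"
  by (simp add: conj_mat_def)

lemma conj_mat_mult_vec_conjugate:
  assumes "A \<in> carrier_mat m n" "v \<in> carrier_vec n"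
  shows "conj_mat A *\<^sub>v conjugate v = conjugate (A *\<^sub>v v)"
  using assms
  by (intro eq_vecI) (auto simp: conj_mat_def scalar_prod_def cnj_sum)

lemma mult_mat_vec_zero: "A \<in> carrier_mat m n \<Longrightarrow> A *\<^sub>v 0\<^sub>v n = 0\<^sub>v m"
  by (intro eq_vecI) auto

lemma smult_mat_mult_vec:
  fixes A :: "'a :: comm_ring mat"
  assumes "A \<in> carrier_mat m n" "v \<in> carrier_vec n"
  shows "(a \<cdot>\<^sub>m A) *\<^sub>v v = a \<cdot>\<^sub>v (A *\<^sub>v v)"
  using assms by (intro eq_vecI) (auto simp: scalar_prod_def sum_distrib_left mult.assoc)

lemma mult_mat_vec_sum_entrywise:
  assumes "finite I" "\<And>\<alpha>. \<alpha> \<in> I \<Longrightarrow> M \<alpha> \<in> carrier_mat m n" "v \<in> carrier_vec n"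
  shows "mat m n (\<lambda>ij. \<Sum>\<alpha>\<in>I. M \<alpha> $$ ij) *\<^sub>v v = vec m (\<lambda>i. \<Sum>\<alpha>\<in>I. (M \<alpha> *\<^sub>v v) $ i)"
proof (rule eq_vecI)
  fix i assume "i < dim_vec (vec m (\<lambda>i. \<Sum>\<alpha>\<in>I. (M \<alpha> *\<^sub>v v) $ i))"
  then have i: "i < m" by simp
  have "(mat m n (\<lambda>ij. \<Sum>\<alpha>\<in>I. M \<alpha> $$ ij) *\<^sub>v v) $ i = (\<Sum>j<n. \<Sum>\<alpha>\<in>I. M \<alpha> $$ (i, j) * v $ j)"
    using i assms(3) by (simp add: scalar_prod_def lessThan_atLeast0 sum_distrib_right)
  also have "\<dots> = (\<Sum>\<alpha>\<in>I. (M \<alpha> *\<^sub>v v) $ i)"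
  proof (subst sum.swap, rule sum.cong[OF refl])
    fix \<alpha> assume "\<alpha> \<in> I"
    then have "dim_row (M \<alpha>) = m" "dim_col (M \<alpha>) = n" using assms(2) by auto
    then show "(\<Sum>j<n. M \<alpha> $$ (i, j) * v $ j) = (M \<alpha> *\<^sub>v v) $ i"
      using i assms(3) by (simp add: scalar_prod_def lessThan_atLeast0)
  qed
  finally show "(mat m n (\<lambda>ij. \<Sum>\<alpha>\<in>I. M \<alpha> $$ ij) *\<^sub>v v) $ i = vec m (\<lambda>i. \<Sum>\<alpha>\<in>I. (M \<alpha> *\<^sub>v v) $ i) $ i"
    using i by simp
qed simp

lemma index_smult_pow_mat:
  fixes A :: "'a :: comm_ring_1 mat"
  assumes A: "A \<in> carrier_mat n n" and ij: "i < n" "j < n"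
  shows "((a \<cdot>\<^sub>m A) ^\<^sub>m k) $$ (i, j) = a ^ k * (A ^\<^sub>m k) $$ (i, j)"
  using ij
proof (induction k arbitrary: j)
  case (Suc k)
  have "((a \<cdot>\<^sub>m A) ^\<^sub>m Suc k) $$ (i, j) = (\<Sum>l<n. ((a \<cdot>\<^sub>m A) ^\<^sub>m k) $$ (i, l) * (a * A $$ (l, j)))"
    using A Suc.prems by (simp add: scalar_prod_def lessThan_atLeast0)
  also have "\<dots> = (\<Sum>l<n. a ^ k * (A ^\<^sub>m k) $$ (i, l) * (a * A $$ (l, j)))"
    using Suc.IH Suc.prems(1) by (intro sum.cong refl) auto
  also have "\<dots> = a ^ Suc k * (A ^\<^sub>m Suc k) $$ (i, j)"
    using A Suc.prems by (simp add: scalar_prod_def lessThan_atLeast0 sum_distrib_left mult_ac)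
  finally show ?case .
qed (use A in simp)

text \<open>Row-major vectorisations of the positive semidefinite \<open>n \<times> n\<close> matrices, generated as
  conic combinations of the rank-one matrices \<open>conj y y\<^sup>T\<close>; on them \<open>conj B \<otimes> B\<close> acts as
  \<open>Y \<mapsto> conj B Y B\<^sup>T\<close>.\<close>

inductive_set psd_cone :: "nat \<Rightarrow> complex vec set" for n :: nat where
  zero: "0\<^sub>v (n * n) \<in> psd_cone n"
| rank_one: "y \<in> carrier_vec n \<Longrightarrow> kron_vec (conjugate y) y \<in> psd_cone n"
| add: "v \<in> psd_cone n \<Longrightarrow> v' \<in> psd_cone n \<Longrightarrow> v + v' \<in> psd_cone n"
| smult: "v \<in> psd_cone n \<Longrightarrow> 0 \<le> c \<Longrightarrow> c \<cdot>\<^sub>v v \<in> psd_cone n"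

lemma psd_cone_carrier: "v \<in> psd_cone n \<Longrightarrow> v \<in> carrier_vec (n * n)"
  by (induction rule: psd_cone.induct) auto

lemma psd_cone_sum:
  assumes "finite I" "\<And>i. i \<in> I \<Longrightarrow> f i \<in> psd_cone n"
  shows "vec (n * n) (\<lambda>j. \<Sum>i\<in>I. f i $ j) \<in> psd_cone n"
  using assms
proof (induction I rule: finite_induct)
  case empty
  then show ?case using psd_cone.zero by (simp add: zero_vec_def)
next
  case (insert i I)
  have "vec (n * n) (\<lambda>j. \<Sum>i\<in>insert i I. f i $ j) = f i + vec (n * n) (\<lambda>j. \<Sum>i\<in>I. f i $ j)"
    using insert psd_cone_carrier[of "f i"] by (intro eq_vecI) auto
  then show ?case using insert by (simp add: psd_cone.add)
qed

lemma kron_conj_mult_psd_cone: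
  assumes B: "B \<in> carrier_mat n n" and v: "v \<in> psd_cone n"
  shows "kron (conj_mat B) B *\<^sub>v v \<in> psd_cone n"
proof -
  have conj_B: "conj_mat B \<in> carrier_mat n n" using B by simp
  have K: "kron (conj_mat B) B \<in> carrier_mat (n * n) (n * n)"
    using kron_carrier_mat[OF conj_B B] .
  show ?thesis
    using v
  proof (induction rule: psd_cone.induct)
    case zero
    then show ?case using psd_cone.zero by (simp add: mult_mat_vec_zero[OF K])
  next
    case (rank_one y)
    have "kron (conj_mat B) B *\<^sub>v kron_vec (conjugate y) y = kron_vec (conjugate (B *\<^sub>v y)) (B *\<^sub>v y)"
      using mult_kron_mat_vec[OF conj_B B carrier_vec_conjugate[OF rank_one] rank_one]
        conj_mat_mult_vec_conjugate[OF B rank_one] by simp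
    then show ?case using psd_cone.rank_one[OF mult_mat_vec_carrier[OF B rank_one]] by simp
  next
    case (add v v')
    then show ?case
      using mult_add_distrib_mat_vec[OF K psd_cone_carrier psd_cone_carrier] by (simp add: psd_cone.add)
  next
    case (smult v c)
    then show ?case
      using mult_mat_vec[OF K psd_cone_carrier] by (simp add: psd_cone.smult)
  qed
qed

lemma scalar_prod_psd_cone_nonneg:
  assumes u: "u \<in> carrier_vec n" and v: "v \<in> psd_cone n"
  shows "0 \<le> kron_vec u (conjugate u) \<bullet> v"
  using v
proof (induction rule: psd_cone.induct)
  case zero
  then show ?case using u by simp
next
  case (rank_one y)
  have "conjugate (u \<bullet>c y) = conjugate u \<bullet> y"
    using conjugate_sprod_vec[of u n "conjugate y"] u rank_one by simp
  then have "kron_vec u (conjugate u) \<bullet> kron_vec (conjugate y) y = (u \<bullet>c y) * conjugate (u \<bullet>c y)"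
    using u rank_one by (simp add: scalar_prod_kron_vec[of u n "conjugate y" "conjugate u" n y])
  then show ?case using conjugate_square_positive[of "u \<bullet>c y"] by simp
next
  case (add v v')
  then show ?case
    using u psd_cone_carrier by (simp add: scalar_prod_add_distrib[of _ "n * n"])
next
  case (smult v c)
  then show ?case
    using u psd_cone_carrier by (simp add: scalar_prod_smult_distrib[of _ "n * n"] mult_nonneg_nonneg)
qed

lemma scalar_prod_kron_vec_conjugate_pos:
  fixes w :: "complex vec"
  assumes w: "w \<in> carrier_vec n" "w \<noteq> 0\<^sub>v n"
  shows "0 < kron_vec w (conjugate w) \<bullet> kron_vec (conjugate w) w"
proof -
  have "0 < w \<bullet>c w" using w by simp
  then have "0 < (w \<bullet>c w) * (w \<bullet>c w)" by (simp add: less_complex_def)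
  then show ?thesis
    using w conjugate_vec_sprod_comm[OF w(1) w(1)]
    by (simp add: scalar_prod_kron_vec[of w n "conjugate w" "conjugate w" n w])
qed

lemma psd_cone_pow_growth:
  assumes T: "T \<in> carrier_mat (n * n) (n * n)"
    and pos: "\<And>v. v \<in> psd_cone n \<Longrightarrow> T *\<^sub>v v \<in> psd_cone n"
    and x: "x \<in> carrier_vec (n * n)"
    and growth: "T *\<^sub>v x - r \<cdot>\<^sub>v x \<in> psd_cone n" and r: "0 \<le> r"
  shows "T ^\<^sub>m k *\<^sub>v x - r ^ k \<cdot>\<^sub>v x \<in> psd_cone n"
proof (induction k)
  case 0
  have "1\<^sub>m (n * n) *\<^sub>v x - 1 \<cdot>\<^sub>v x = 0\<^sub>v (n * n)" using x by (intro eq_vecI) auto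
  then show ?case using T psd_cone.zero by simp
next
  case (Suc k)
  have pos_pow: "T ^\<^sub>m j *\<^sub>v v \<in> psd_cone n" if "v \<in> psd_cone n" for j v
    using that
  proof (induction j arbitrary: v)
    case (Suc j)
    have "T ^\<^sub>m Suc j *\<^sub>v v = T ^\<^sub>m j *\<^sub>v (T *\<^sub>v v)"
      using assoc_mult_mat_vec[OF pow_carrier_mat[OF T] T psd_cone_carrier[OF Suc.prems]] by simp
    then show ?case using Suc pos by simp
  qed (use T psd_cone_carrier in simp)
  let ?P = "T ^\<^sub>m k"
  have P: "?P \<in> carrier_mat (n * n) (n * n)" using T by simp
  have Tx: "T *\<^sub>v x \<in> carrier_vec (n * n)" using T x by simp
  have "T ^\<^sub>m Suc k *\<^sub>v x = ?P *\<^sub>v (T *\<^sub>v x)"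
    using assoc_mult_mat_vec[OF P T x] by simp
  moreover have "?P *\<^sub>v (T *\<^sub>v x - r \<cdot>\<^sub>v x) = ?P *\<^sub>v (T *\<^sub>v x) - r \<cdot>\<^sub>v (?P *\<^sub>v x)"
    using mult_minus_distrib_mat_vec[OF P Tx smult_carrier_vec[THEN iffD2, OF x]] mult_mat_vec[OF P x]
    by simp
  ultimately have "T ^\<^sub>m Suc k *\<^sub>v x - r ^ Suc k \<cdot>\<^sub>v x
      = ?P *\<^sub>v (T *\<^sub>v x - r \<cdot>\<^sub>v x) + r \<cdot>\<^sub>v (?P *\<^sub>v x - r ^ k \<cdot>\<^sub>v x)"
    using P Tx x by (intro eq_vecI) (auto simp: algebra_simps)
  also have "\<dots> \<in> psd_cone n"
    using Suc growth r by (intro psd_cone.add psd_cone.smult pos_pow)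
  finally show ?case .
qed

lemma of_real_le_imp_le_cmod: "complex_of_real t \<le> b \<Longrightarrow> t \<le> cmod b"
  using abs_Re_le_cmod[of b] by (simp add: less_eq_complex_def) linarith

lemma norm_scalar_prod_mult_mat_vec_le:
  fixes A :: "'a :: real_normed_field mat"
  assumes A: "A \<in> carrier_mat m n" and u: "u \<in> carrier_vec m" and x: "x \<in> carrier_vec n"
    and b: "norm_bound A b"
  shows "norm (u \<bullet> (A *\<^sub>v x)) \<le> b * (\<Sum>i<m. norm (u $ i)) * (\<Sum>j<n. norm (x $ j))"
proof -
  have "u \<bullet> (A *\<^sub>v x) = (\<Sum>i<m. \<Sum>j<n. u $ i * A $$ (i, j) * x $ j)"
    using A u x by (simp add: scalar_prod_def lessThan_atLeast0 sum_distrib_left mult.assoc)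
  also have "norm \<dots> \<le> (\<Sum>i<m. \<Sum>j<n. norm (u $ i) * norm (A $$ (i, j)) * norm (x $ j))"
    by (rule order_trans[OF norm_sum sum_mono], rule order_trans[OF norm_sum sum_mono])
      (simp add: norm_mult)
  also have "\<dots> \<le> (\<Sum>i<m. \<Sum>j<n. norm (u $ i) * b * norm (x $ j))"
    using A b unfolding norm_bound_def by (intro sum_mono mult_right_mono mult_left_mono) auto
  also have "\<dots> = b * (\<Sum>i<m. norm (u $ i)) * (\<Sum>j<n. norm (x $ j))"
    by (simp add: sum_product sum_distrib_left mult_ac)
  finally show ?thesis .
qed

lemma norm_bound_pow_mat_geometric:
  fixes A :: "complex mat"
  assumes A: "A \<in> carrier_mat n n" and n: "0 < n" and s: "spectral_radius A < s"
  shows "\<exists>c. \<forall>k. norm_bound (A ^\<^sub>m k) (c * s ^ k)"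
proof -
  have "0 \<le> spectral_radius A" using spectral_radius_mem_max(1)[OF A n] by auto
  with s have s0: "0 < s" by linarith
  define S where "S = complex_of_real (1 / s) \<cdot>\<^sub>m A"
  have S: "S \<in> carrier_mat n n" using A by (simp add: S_def)
  have "cmod \<mu> < 1" if "\<mu> \<in> spectrum S" for \<mu>
  proof -
    from that obtain v where v: "v \<in> carrier_vec n" "v \<noteq> 0\<^sub>v n" and ev: "S *\<^sub>v v = \<mu> \<cdot>\<^sub>v v"
      unfolding spectrum_def eigenvalue_def eigenvector_def using S by auto
    have "A *\<^sub>v v = complex_of_real s \<cdot>\<^sub>v (S *\<^sub>v v)"
      using s0 A v by (simp add: S_def smult_mat_mult_vec smult_smult_assoc)
    also have "\<dots> = (complex_of_real s * \<mu>) \<cdot>\<^sub>v v" by (simp add: ev smult_smult_assoc)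
    finally have "complex_of_real s * \<mu> \<in> spectrum A"
      using A v unfolding spectrum_def eigenvalue_def eigenvector_def by auto
    then have "cmod (complex_of_real s * \<mu>) \<le> spectral_radius A"
      using spectral_radius_mem_max(2)[OF A n] by blast
    then have "s * cmod \<mu> \<le> spectral_radius A" using s0 by (simp add: norm_mult)
    with s have "s * cmod \<mu> < s * 1" by simp
    then show "cmod \<mu> < 1" using s0 by (simp only: mult_less_cancel_left_pos)
  qed
  then have "spectral_radius S < 1" using spectral_radius_mem_max(1)[OF S n] by auto
  then obtain c where c: "\<And>k. norm_bound (S ^\<^sub>m k) c"
    using spectral_radius_jnf_norm_bound_less_1_upper_triangular[OF S] by auto
  have "norm_bound (A ^\<^sub>m k) (c * s ^ k)" for k
  proof (rule norm_boundI)
    fix i j assume "i < dim_row (A ^\<^sub>m k)" "j < dim_col (A ^\<^sub>m k)"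
    then have ij: "i < n" "j < n" using carrier_matD[OF pow_carrier_mat[OF A, of k]] by auto
    have "(1 / s) ^ k * cmod ((A ^\<^sub>m k) $$ (i, j)) = cmod ((S ^\<^sub>m k) $$ (i, j))"
      using s0 by (simp add: S_def index_smult_pow_mat[OF A ij] norm_mult norm_power norm_divide)
    also have "\<dots> \<le> c" using c[of k] ij S unfolding norm_bound_def by auto
    finally show "cmod ((A ^\<^sub>m k) $$ (i, j)) \<le> c * s ^ k"
      using s0 by (simp add: field_simps)
  qed
  then show ?thesis by blast
qed

lemma spectral_radius_ge_growth_rate:
  fixes T :: "complex mat"
  assumes T: "T \<in> carrier_mat n n" and u: "u \<in> carrier_vec n" and x: "x \<in> carrier_vec n"
    and c: "0 < c" and growth: "\<And>k. r ^ k * c \<le> cmod (u \<bullet> (T ^\<^sub>m k *\<^sub>v x))"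
  shows "r \<le> spectral_radius T"
proof (rule ccontr)
  assume "\<not> r \<le> spectral_radius T"
  then have lt: "spectral_radius T < r" by simp
  have "n \<noteq> 0"
  proof
    assume "n = 0"
    then have "u \<bullet> (T ^\<^sub>m 0 *\<^sub>v x) = 0" using carrier_matD[OF T] by (simp add: scalar_prod_def)
    with growth[of 0] c show False by simp
  qed
  then have "0 \<le> spectral_radius T" using spectral_radius_mem_max(1)[OF T] by auto
  define s where "s = (spectral_radius T + r) / 2"
  have s: "spectral_radius T < s" "s < r" "0 < s" using lt \<open>0 \<le> spectral_radius T\<close> by (auto simp: s_def)
  obtain b where b: "\<And>k. norm_bound (T ^\<^sub>m k) (b * s ^ k)"
    using norm_bound_pow_mat_geometric[OF T _ s(1)] \<open>n \<noteq> 0\<close> by auto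
  define C where "C = b * (\<Sum>i<n. cmod (u $ i)) * (\<Sum>j<n. cmod (x $ j))"
  have "(r / s) ^ k * c \<le> C" for k
  proof -
    have "r ^ k * c \<le> b * s ^ k * (\<Sum>i<n. cmod (u $ i)) * (\<Sum>j<n. cmod (x $ j))"
      using growth[of k] norm_scalar_prod_mult_mat_vec_le[OF pow_carrier_mat[OF T] u x b[of k]]
      by linarith
    then have "r ^ k * c \<le> C * s ^ k" by (simp add: C_def mult_ac)
    then have "r ^ k * c / s ^ k \<le> C" using s(3) by (simp add: pos_divide_le_eq)
    then show ?thesis by (simp add: power_divide)
  qed
  moreover obtain k where "C / c < (r / s) ^ k" using real_arch_pow[of "r / s"] s by auto
  then have "C < (r / s) ^ k * c" using c by (simp add: pos_divide_less_eq)
  ultimately show False using not_le by blast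
qed

lemma component_mat_carrier: "component_mat q \<chi> Ob AA \<alpha> \<in> carrier_mat \<chi> \<chi>"
  by (simp add: component_mat_def)

lemma transfer_mat_carrier: "transfer_mat q \<chi> Ob AA \<in> carrier_mat (\<chi> * \<chi>) (\<chi> * \<chi>)"
  by (simp add: transfer_mat_def)

lemma transfer_mat_mult_vec:
  assumes "v \<in> carrier_vec (\<chi> * \<chi>)"
  shows "transfer_mat q \<chi> Ob AA *\<^sub>v v = vec (\<chi> * \<chi>) (\<lambda>i. \<Sum>\<alpha><q^2.
    (kron (conj_mat (component_mat q \<chi> Ob AA \<alpha>)) (component_mat q \<chi> Ob AA \<alpha>) *\<^sub>v v) $ i)"
  unfolding transfer_mat_def
  using assms component_mat_carrier
  by (intro mult_mat_vec_sum_entrywise kron_carrier_mat) auto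

lemma transfer_mat_psd_cone:
  "v \<in> psd_cone \<chi> \<Longrightarrow> transfer_mat q \<chi> Ob AA *\<^sub>v v \<in> psd_cone \<chi>"
  unfolding transfer_mat_mult_vec[OF psd_cone_carrier]
  by (intro psd_cone_sum kron_conj_mult_psd_cone component_mat_carrier) auto

lemma transfer_mat_eigenvector_growth:
  assumes "\<beta> < q^2" "w \<in> carrier_vec \<chi>" "component_mat q \<chi> Ob AA \<beta> *\<^sub>v w = z \<cdot>\<^sub>v w"
  defines "x \<equiv> kron_vec (conjugate w) w"
  shows "transfer_mat q \<chi> Ob AA *\<^sub>v x - of_real (cmod z ^ 2) \<cdot>\<^sub>v x \<in> psd_cone \<chi>"
proof -
  let ?A = "component_mat q \<chi> Ob AA"
  let ?K = "\<lambda>\<alpha>. kron (conj_mat (?A \<alpha>)) (?A \<alpha>)"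
  have x: "x \<in> carrier_vec (\<chi> * \<chi>)" using assms(2) by (simp add: x_def)
  have A: "?A \<beta> \<in> carrier_mat \<chi> \<chi>" by (rule component_mat_carrier)
  have "?K \<beta> *\<^sub>v x = kron_vec (conjugate (z \<cdot>\<^sub>v w)) (z \<cdot>\<^sub>v w)"
    using mult_kron_mat_vec[OF conj_mat_carrier[OF A] A carrier_vec_conjugate[OF assms(2)] assms(2)]
      conj_mat_mult_vec_conjugate[OF A assms(2)] assms(3)
    by (simp add: x_def)
  also have "\<dots> = (cnj z * z) \<cdot>\<^sub>v x"
    by (simp add: x_def conjugate_smult_vec kron_vec_smult)
  also have "cnj z * z = of_real (cmod z ^ 2)"
    by (metis complex_norm_square mult.commute)
  finally have K_\<beta>: "?K \<beta> *\<^sub>v x = of_real (cmod z ^ 2) \<cdot>\<^sub>v x" .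
  have "transfer_mat q \<chi> Ob AA *\<^sub>v x - of_real (cmod z ^ 2) \<cdot>\<^sub>v x
      = vec (\<chi> * \<chi>) (\<lambda>i. \<Sum>\<alpha>\<in>{..<q^2} - {\<beta>}. (?K \<alpha> *\<^sub>v x) $ i)"
    using x assms(1) by (intro eq_vecI) (auto simp: transfer_mat_mult_vec sum.remove K_\<beta>)
  also have "\<dots> \<in> psd_cone \<chi>"
    using assms(2) by (intro psd_cone_sum kron_conj_mult_psd_cone component_mat_carrier)
      (auto simp: x_def psd_cone.rank_one)
  finally show ?thesis .
qed

lemma transfer_mat_spectral_radius_ge:
  assumes "\<beta> < q^2" and "eigenvalue (component_mat q \<chi> Ob AA \<beta>) z"
  shows "cmod z ^ 2 \<le> spectral_radius (transfer_mat q \<chi> Ob AA)"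
proof -
  let ?T = "transfer_mat q \<chi> Ob AA"
  have "dim_row (component_mat q \<chi> Ob AA \<beta>) = \<chi>" by (simp add: component_mat_def)
  then obtain w where w: "w \<in> carrier_vec \<chi>" "w \<noteq> 0\<^sub>v \<chi>"
    and ev: "component_mat q \<chi> Ob AA \<beta> *\<^sub>v w = z \<cdot>\<^sub>v w"
    using assms(2) unfolding eigenvalue_def eigenvector_def by auto
  define x where "x = kron_vec (conjugate w) w"
  define u where "u = kron_vec w (conjugate w)"
  have x: "x \<in> carrier_vec (\<chi> * \<chi>)" and u: "u \<in> carrier_vec (\<chi> * \<chi>)"
    using w by (simp_all add: x_def u_def)
  define r where "r = cmod z ^ 2"
  have cone: "?T ^\<^sub>m k *\<^sub>v x - of_real (r ^ k) \<cdot>\<^sub>v x \<in> psd_cone \<chi>" for k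
    using psd_cone_pow_growth[OF transfer_mat_carrier transfer_mat_psd_cone x
        transfer_mat_eigenvector_growth[OF assms(1) w(1) ev, folded x_def]]
    by (simp add: r_def less_eq_complex_def)
  define c where "c = cmod (u \<bullet> x)"
  from scalar_prod_kron_vec_conjugate_pos[OF w] have ux: "u \<bullet> x = of_real c" and c: "0 < c"
    by (auto simp: u_def x_def c_def less_complex_def complex_eq_iff cmod_eq_Re)
  have "r ^ k * c \<le> cmod (u \<bullet> (?T ^\<^sub>m k *\<^sub>v x))" for k
  proof -
    have Tk: "?T ^\<^sub>m k *\<^sub>v x \<in> carrier_vec (\<chi> * \<chi>)"
      by (rule mult_mat_vec_carrier[OF pow_carrier_mat[OF transfer_mat_carrier] x])
    have "0 \<le> u \<bullet> (?T ^\<^sub>m k *\<^sub>v x - of_real (r ^ k) \<cdot>\<^sub>v x)"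
      using scalar_prod_psd_cone_nonneg[OF w(1) cone] by (simp add: u_def)
    also have "\<dots> = u \<bullet> (?T ^\<^sub>m k *\<^sub>v x) - of_real (r ^ k * c)"
      using u x Tk by (simp add: scalar_prod_minus_distrib[of _ "\<chi> * \<chi>"] ux)
    finally have "of_real (r ^ k * c) \<le> u \<bullet> (?T ^\<^sub>m k *\<^sub>v x)" by simp
    then show ?thesis by (rule of_real_le_imp_le_cmod)
  qed
  from spectral_radius_ge_growth_rate[OF transfer_mat_carrier u x c this]
  show ?thesis by (simp add: r_def)
qed

theorem lemma2:
  fixes q \<chi> :: nat
    and Ob :: "nat \<Rightarrow> complex mat"
    and AA :: "nat \<Rightarrow> nat \<Rightarrow> complex mat"
  assumes "q > 0"
    and "orthonormal_operator_basis q Ob"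
    and "\<forall>a<\<chi>. \<forall>b<\<chi>. AA a b \<in> carrier_mat q q"
    and "\<forall>z. eigenvalue (transfer_mat q \<chi> Ob AA) z \<longrightarrow> cmod z < 1"
  shows "\<forall>z. eigenvalue (component_mat q \<chi> Ob AA 0) z \<longrightarrow> cmod z < 1"
proof (intro allI impI)
  fix z assume ev: "eigenvalue (component_mat q \<chi> Ob AA 0) z"
  have "0 < \<chi> * \<chi>" using eigenvalue_imp_nonzero_dim[OF component_mat_carrier ev] by simp
  then have "spectral_radius (transfer_mat q \<chi> Ob AA) \<in> cmod ` spectrum (transfer_mat q \<chi> Ob AA)"
    by (rule spectral_radius_mem_max(1)[OF transfer_mat_carrier])
  then have "spectral_radius (transfer_mat q \<chi> Ob AA) < 1"
    using assms(4) by (auto simp: spectrum_def)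
  moreover have "cmod z ^ 2 \<le> spectral_radius (transfer_mat q \<chi> Ob AA)"
    using transfer_mat_spectral_radius_ge[OF _ ev] assms(1) by simp
  ultimately show "cmod z < 1" using abs_square_less_1[of "cmod z"] by simp
qed

end
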